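(* Let $G=\mathrm{GL}_n$ over $L$ with diagonal torus $T$ and upper triangular Borel $B$, and let $Q=M\ltimes N$, $Q'=M'\ltimes N'$ be standard parabolic subgroups. Let $\nu\in X_*(Z_{M'})$ be a $B$-dominant cocharacter and let $w\in{}^{Q'}W^{Q}$. Put $Q^M_{w^{-1}}=M\cap w^{-1}Q'w$, a standard parabolic subgroup of $M$ with Levi $M_{w^{-1}}$, and $Q^{M'}_w=M'\cap wQw^{-1}$ with Levi $M'_w$. Then $w^{-1}\nu\in X_*(Z_{M_{w^{-1}}})$ and it is $(B\cap M)$-dominant. In particular the isomorphism $M'_w(L)\to M_{w^{-1}}(L)$, $m\mapsto w^{-1}mw$, maps $Z_{M'}^+$ into $Z_{M_{w^{-1}}}^+$.
   Context: $L/\mathbf Q_p$ finite with ring of integers $\mathcal O_L$ and uniformiser $\varpi_L$. $W$ is the Weyl group of $(G,T)$, $W_Q$ the Weyl group of $M$, and ${}^{Q'}W^Q$ the set of minimal length representatives of $W_{Q'}\backslash W/W_Q$. For a parabolic $P=M_P\ltimes N_P$ (of $G$ or of a Levi subgroup, standard with respect to the relevant Borel), $Z_{M_P}^+=\{z\in Z_{M_P}(L): zN_P(\mathcal O_L)z^{-1}\subset N_P(\mathcal O_L),\ z^{-1}\overline N_P^1z\subset\overline N_P^1\}$, where $\overline N_P^1$ is the kernel of reduction mod $\varpi_L$ on the opposite unipotent radical; $Z_{M_{w^{-1}}}^+$ is taken with respect to the parabolic $Q^M_{w^{-1}}$ of $M$. *)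

theory Defs
  imports "Jordan_Normal_Form.Matrix" "HOL-Combinatorics.Permutations"
begin

text \<open>L is modelled as a field of characteristic 0 with a normalised discrete valuation
  v (v x meaningful for x \<noteq> 0), uniformiser pi (v pi = 1), complete, with finite residue field.
  These properties characterise the finite extensions of Q_p.\<close>

definition vball :: "('k::field \<Rightarrow> int) \<Rightarrow> int \<Rightarrow> 'k set" where
  "vball v N = {x. x = 0 \<or> N \<le> v x}"

abbreviation intring :: "('k::field \<Rightarrow> int) \<Rightarrow> 'k set" where
  "intring v \<equiv> vball v 0"

abbreviation maxideal :: "('k::field \<Rightarrow> int) \<Rightarrow> 'k set" where
  "maxideal v \<equiv> vball v 1"

definition padic_field :: "('k::field_char_0 \<Rightarrow> int) \<Rightarrow> 'k \<Rightarrow> bool" where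
  "padic_field v \<pi> \<longleftrightarrow>
     \<pi> \<noteq> 0 \<and> v \<pi> = 1 \<and>
     (\<forall>x y. x \<noteq> 0 \<and> y \<noteq> 0 \<longrightarrow> v (x * y) = v x + v y) \<and>
     (\<forall>x y. x \<noteq> 0 \<and> y \<noteq> 0 \<and> x + y \<noteq> 0 \<longrightarrow> min (v x) (v y) \<le> v (x + y)) \<and>
     (\<exists>F. finite F \<and> F \<subseteq> intring v \<and> (\<forall>x\<in>intring v. \<exists>a\<in>F. x - a \<in> maxideal v)) \<and>
     (\<forall>s::nat \<Rightarrow> 'k. (\<forall>N. \<exists>m0. \<forall>m\<ge>m0. \<forall>l\<ge>m0. s m - s l \<in> vball v N)
        \<longrightarrow> (\<exists>x. \<forall>N. \<exists>m0. \<forall>m\<ge>m0. x - s m \<in> vball v N))"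

text \<open>Indices 0..n-1. A standard parabolic is given by a set J \<subseteq> {i. i+1 < n} of simple roots
  e_i - e_(i+1) belonging to its Levi; i, j lie in the same Levi block iff all k between
  them are in J.\<close>

definition blk :: "nat set \<Rightarrow> nat \<Rightarrow> nat \<Rightarrow> bool" where
  "blk J i j \<longleftrightarrow> (\<forall>k. min i j \<le> k \<and> k < max i j \<longrightarrow> k \<in> J)"

definition GLn :: "nat \<Rightarrow> 'k::field mat set" where
  "GLn n = {A \<in> carrier_mat n n. invertible_mat A}"

definition pattern_grp :: "nat \<Rightarrow> (nat \<Rightarrow> nat \<Rightarrow> bool) \<Rightarrow> 'k::field mat set" where
  "pattern_grp n P = {A \<in> GLn n. \<forall>i<n. \<forall>j<n. \<not> P i j \<longrightarrow> A $$ (i,j) = 0}"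

text \<open>Q = M N (standard parabolic), M its standard Levi, N its unipotent radical,
  Nbar the opposite unipotent radical (L-points).\<close>

definition parQ :: "nat \<Rightarrow> nat set \<Rightarrow> 'k::field mat set" where
  "parQ n J = pattern_grp n (\<lambda>i j. i \<le> j \<or> blk J i j)"

definition levi :: "nat \<Rightarrow> nat set \<Rightarrow> 'k::field mat set" where
  "levi n J = pattern_grp n (blk J)"

definition unip :: "nat \<Rightarrow> nat set \<Rightarrow> 'k::field mat set" where
  "unip n J = {A \<in> GLn n. \<forall>i<n. A $$ (i,i) = 1 \<and>
      (\<forall>j<n. i \<noteq> j \<and> \<not> (i < j \<and> \<not> blk J i j) \<longrightarrow> A $$ (i,j) = 0)}"

definition ounip :: "nat \<Rightarrow> nat set \<Rightarrow> 'k::field mat set" where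
  "ounip n J = {A \<in> GLn n. \<forall>i<n. A $$ (i,i) = 1 \<and>
      (\<forall>j<n. i \<noteq> j \<and> \<not> (j < i \<and> \<not> blk J i j) \<longrightarrow> A $$ (i,j) = 0)}"

definition center_of :: "'k::field mat set \<Rightarrow> 'k mat set" where
  "center_of H = {z \<in> H. \<forall>h\<in>H. z * h = h * z}"

text \<open>W = permutations of {0..n-1}; w acts via the permutation matrix sending e_j to e_(w j).\<close>

definition weyl :: "nat \<Rightarrow> (nat \<Rightarrow> nat) set" where
  "weyl n = {w. w permutes {..<n}}"

definition weyl_levi :: "nat \<Rightarrow> nat set \<Rightarrow> (nat \<Rightarrow> nat) set" where
  "weyl_levi n J = {w \<in> weyl n. \<forall>i<n. blk J i (w i)}"

definition wlen :: "nat \<Rightarrow> (nat \<Rightarrow> nat) \<Rightarrow> nat" where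
  "wlen n w = (LEAST k. \<exists>ss. length ss = k \<and> (\<forall>i\<in>set ss. Suc i < n) \<and>
      w = foldr (\<lambda>i f. transpose i (Suc i) \<circ> f) ss id)"

definition minrep :: "nat \<Rightarrow> nat set \<Rightarrow> nat set \<Rightarrow> (nat \<Rightarrow> nat) \<Rightarrow> bool" where
  "minrep n J' J w \<longleftrightarrow> w \<in> weyl n \<and>
     (\<forall>u\<in>weyl_levi n J'. \<forall>y\<in>weyl_levi n J. wlen n w \<le> wlen n (u \<circ> w \<circ> y))"

definition perm_mat :: "nat \<Rightarrow> (nat \<Rightarrow> nat) \<Rightarrow> 'k::field mat" where
  "perm_mat n w = mat n n (\<lambda>(i,j). if i = w j then 1 else 0)"

definition conj :: "nat \<Rightarrow> (nat \<Rightarrow> nat) \<Rightarrow> 'k::field mat \<Rightarrow> 'k mat" where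
  "conj n w A = perm_mat n w * A * perm_mat n (inv_into UNIV w)"

text \<open>X_*(T) = Z^n: lambda(t) = diag(t^lambda_0, ..., t^lambda_(n-1)).\<close>

definition cochar_mat :: "nat \<Rightarrow> (nat \<Rightarrow> int) \<Rightarrow> 'k::field \<Rightarrow> 'k mat" where
  "cochar_mat n lam t = mat n n (\<lambda>(i,j). if i = j then t powi lam i else 0)"

text \<open>lambda lies in X_*(H) (H a subtorus, given by its L-points) iff lambda(t) \<in> H for all t.\<close>

definition cochar_in :: "nat \<Rightarrow> (nat \<Rightarrow> int) \<Rightarrow> 'k::field mat set \<Rightarrow> bool" where
  "cochar_in n lam H \<longleftrightarrow> (\<forall>t::'k. t \<noteq> 0 \<longrightarrow> cochar_mat n lam t \<in> H)"

text \<open>Weyl action: (w lambda)(t) = w lambda(t) w^{-1}, i.e. (w lambda)_(w i) = lambda_i.\<close>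

definition weyl_act :: "(nat \<Rightarrow> nat) \<Rightarrow> (nat \<Rightarrow> int) \<Rightarrow> (nat \<Rightarrow> int)" where
  "weyl_act w lam = lam \<circ> inv_into UNIV w"

definition B_dominant :: "nat \<Rightarrow> (nat \<Rightarrow> int) \<Rightarrow> bool" where
  "B_dominant n lam \<longleftrightarrow> (\<forall>i j. i < j \<and> j < n \<longrightarrow> lam j \<le> lam i)"

text \<open>(B \<inter> M)-dominance: nonnegative pairing with the positive roots e_i - e_j of M.\<close>

definition BM_dominant :: "nat \<Rightarrow> nat set \<Rightarrow> (nat \<Rightarrow> int) \<Rightarrow> bool" where
  "BM_dominant n J lam \<longleftrightarrow> (\<forall>i j. i < j \<and> j < n \<and> blk J i j \<longrightarrow> lam j \<le> lam i)"

definition integral_mats :: "nat \<Rightarrow> ('k::field \<Rightarrow> int) \<Rightarrow> 'k mat set" where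
  "integral_mats n v = {A. \<forall>i<n. \<forall>j<n. A $$ (i,j) \<in> intring v}"

definition level1_mats :: "nat \<Rightarrow> ('k::field \<Rightarrow> int) \<Rightarrow> 'k mat set" where
  "level1_mats n v = {A. \<forall>i<n. \<forall>j<n. A $$ (i,j) - (1\<^sub>m n) $$ (i,j) \<in> maxideal v}"

text \<open>Z^+ for a Levi with centre Z(L), unipotent radical Nu(L), opposite unipotent radical
  Nb(L): z Nu(O) z^{-1} \<subseteq> Nu(O) and z^{-1} Nb^1 z \<subseteq> Nb^1.\<close>

definition Zplus :: "nat \<Rightarrow> ('k::field \<Rightarrow> int) \<Rightarrow> 'k mat set \<Rightarrow> 'k mat set \<Rightarrow> 'k mat set \<Rightarrow> 'k mat set" where
  "Zplus n v Z Nu Nb = {z \<in> Z.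
     (\<forall>u \<in> Nu \<inter> integral_mats n v. \<exists>u' \<in> Nu \<inter> integral_mats n v. z * u = u' * z) \<and>
     (\<forall>u \<in> Nb \<inter> level1_mats n v. \<exists>u' \<in> Nb \<inter> level1_mats n v. u * z = z * u')}"

end

theory Submission
  imports Defs
begin

text \<open>Conjugation by the permutation matrix of \<open>w\<^sup>-\<^sup>1\<close> only re-indexes matrix entries
  by \<open>w\<close>. In characteristic \<open>0\<close> the centre of a standard Levi subgroup consists of diagonal
  matrices, so its conjugates are diagonal and hence central in \<open>M \<inter> w\<^sup>-\<^sup>1 M' w\<close>, which
  gives the statement on \<open>w\<^sup>-\<^sup>1\<nu>\<close> as a cocharacter. An invertible diagonal \<open>z\<close> with
  \<open>z u = u' z\<close> forces \<open>u\<close> and \<open>u'\<close> to have the same zero entries; hence conjugating the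
  elements \<open>u'\<close> that witness \<open>z \<in> Z\<^sup>+\<close> keeps them inside \<open>M\<close>, while integrality and the
  level-one condition, being entrywise, survive re-indexing. Finally \<open>w\<close> is increasing on
  every block of \<open>M\<close>: since the Coxeter length is the number of inversions, a descent of \<open>w\<close>
  at a simple reflection \<open>s\<close> of \<open>M\<close> would make \<open>w s\<close> a shorter element of the double coset.
  This is the \<open>(B \<inter> M)\<close>-dominance of \<open>w\<^sup>-\<^sup>1\<nu>\<close>.\<close>

section \<open>Conjugation by permutation matrices\<close>

lemma index_mult_mat_sum:
  assumes "A \<in> carrier_mat n m" "B \<in> carrier_mat m k" "i < n" "j < k"
  shows "(A * B) $$ (i,j) = (\<Sum>l<m. A $$ (i,l) * B $$ (l,j))"
  using assms by (auto simp: scalar_prod_def lessThan_atLeast0 intro!: sum.cong)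

lemma GLn_carrier: "A \<in> GLn n \<Longrightarrow> A \<in> carrier_mat n n"
  by (simp add: GLn_def)

lemma perm_mat_carrier [simp]: "perm_mat n p \<in> carrier_mat n n"
  by (simp add: perm_mat_def)

lemma index_perm_mat_mult:
  assumes p: "p permutes {..<n}" and A: "(A :: 'k::field mat) \<in> carrier_mat n m"
    and i: "i < n" and j: "j < m"
  shows "(perm_mat n p * A) $$ (i,j) = A $$ (inv_into UNIV p i, j)"
proof -
  have "(perm_mat n p * A) $$ (i,j) = (\<Sum>l<n. if l = inv_into UNIV p i then A $$ (l,j) else 0)"
    unfolding index_mult_mat_sum[OF perm_mat_carrier A i j]
  proof (intro sum.cong refl)
    fix l assume "l \<in> {..<n}"
    moreover have "i = p l \<longleftrightarrow> l = inv_into UNIV p i"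
      using permutes_inverses[OF p] by metis
    ultimately show
      "perm_mat n p $$ (i,l) * A $$ (l,j) = (if l = inv_into UNIV p i then A $$ (l,j) else 0)"
      using i by (simp add: perm_mat_def)
  qed
  also have "\<dots> = A $$ (inv_into UNIV p i, j)"
    using permutes_in_image[OF permutes_inv[OF p]] i by simp
  finally show ?thesis .
qed

lemma index_mult_perm_mat:
  assumes p: "p permutes {..<n}" and A: "(A :: 'k::field mat) \<in> carrier_mat m n"
    and i: "i < m" and j: "j < n"
  shows "(A * perm_mat n p) $$ (i,j) = A $$ (i, p j)"
proof -
  have "(A * perm_mat n p) $$ (i,j) = (\<Sum>l<n. if l = p j then A $$ (i,l) else 0)"
    unfolding index_mult_mat_sum[OF A perm_mat_carrier i j]
    using j by (intro sum.cong) (auto simp: perm_mat_def)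
  also have "\<dots> = A $$ (i, p j)"
    using permutes_in_image[OF p] j by simp
  finally show ?thesis .
qed

lemma conj_carrier [simp]: "A \<in> carrier_mat n n \<Longrightarrow> conj n p A \<in> carrier_mat n n"
  unfolding conj_def by (auto intro!: mult_carrier_mat)

lemma index_conj:
  assumes p: "p permutes {..<n}" and A: "(A :: 'k::field mat) \<in> carrier_mat n n"
    and i: "i < n" and j: "j < n"
  shows "conj n p A $$ (i,j) = A $$ (inv_into UNIV p i, inv_into UNIV p j)"
proof -
  have qj: "inv_into UNIV p j < n"
    using permutes_in_image[OF permutes_inv[OF p]] j by simp
  have PA: "perm_mat n p * A \<in> carrier_mat n n"
    using A by (auto intro!: mult_carrier_mat)
  show ?thesis
    unfolding conj_def
    using index_mult_perm_mat[OF permutes_inv[OF p] PA i j] index_perm_mat_mult[OF p A i qj]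
    by simp
qed

lemma conj_mult:
  assumes p: "p permutes {..<n}"
    and A: "(A :: 'k::field mat) \<in> carrier_mat n n" and B: "B \<in> carrier_mat n n"
  shows "conj n p (A * B) = conj n p A * conj n p B"
proof (rule eq_matI)
  fix i j assume "i < dim_row (conj n p A * conj n p B)" "j < dim_col (conj n p A * conj n p B)"
  then have i: "i < n" and j: "j < n"
    using conj_carrier[OF A, of p] conj_carrier[OF B, of p] by auto
  let ?q = "inv_into UNIV p"
  have q: "?q permutes {..<n}"
    using p by (rule permutes_inv)
  have AB: "A * B \<in> carrier_mat n n"
    using A B by (rule mult_carrier_mat)
  have qn: "?q l < n" if "l < n" for l
    using permutes_in_image[OF q] that by simp
  have "conj n p (A * B) $$ (i,j) = (\<Sum>l<n. A $$ (?q i, l) * B $$ (l, ?q j))"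
    by (simp add: index_conj[OF p AB i j] index_mult_mat_sum[OF A B qn[OF i] qn[OF j]])
  also have "\<dots> = (\<Sum>l<n. A $$ (?q i, ?q l) * B $$ (?q l, ?q j))"
    by (subst sum.permute[OF q]) simp
  also have "\<dots> = (conj n p A * conj n p B) $$ (i,j)"
    by (simp add: index_mult_mat_sum[OF conj_carrier[OF A] conj_carrier[OF B] i j]
        index_conj[OF p A] index_conj[OF p B] i j)
  finally show "conj n p (A * B) $$ (i,j) = (conj n p A * conj n p B) $$ (i,j)" .
qed (simp_all add: conj_def perm_mat_def)

lemma conj_one:
  assumes p: "p permutes {..<n}"
  shows "conj n p (1\<^sub>m n) = (1\<^sub>m n :: 'k::field mat)"
proof (rule eq_matI)
  fix i j assume "i < dim_row (1\<^sub>m n :: 'k mat)" "j < dim_col (1\<^sub>m n :: 'k mat)"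
  then have i: "i < n" and j: "j < n"
    by auto
  have "inv_into UNIV p i < n" "inv_into UNIV p j < n"
    using permutes_in_image[OF permutes_inv[OF p]] i j by simp_all
  moreover have "inv_into UNIV p i = inv_into UNIV p j \<longleftrightarrow> i = j"
    using permutes_inj[OF permutes_inv[OF p]] by (simp add: inj_eq)
  ultimately show "conj n p (1\<^sub>m n) $$ (i,j) = (1\<^sub>m n :: 'k mat) $$ (i,j)"
    using i j by (simp add: index_conj[OF p one_carrier_mat i j])
qed (simp_all add: conj_def perm_mat_def)

lemma inverts_mat_carrier:
  assumes A: "A \<in> carrier_mat n n" and "inverts_mat A B" "inverts_mat B A"
  shows "(B :: 'k::field mat) \<in> carrier_mat n n"
proof -
  have AB: "A * B = 1\<^sub>m n" and BA: "B * A = 1\<^sub>m (dim_row B)"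
    using assms by (simp_all add: inverts_mat_def)
  have "dim_col B = n"
    using arg_cong[OF AB, of dim_col] by simp
  moreover have "dim_row B = n"
    using arg_cong[OF BA, of dim_col] A by simp
  ultimately show ?thesis
    by auto
qed

lemma conj_GLn:
  assumes p: "p permutes {..<n}" and A: "(A :: 'k::field mat) \<in> GLn n"
  shows "conj n p A \<in> GLn n"
proof -
  have AC: "A \<in> carrier_mat n n"
    using A by (rule GLn_carrier)
  obtain B where B: "inverts_mat A B" "inverts_mat B A"
    using A by (auto simp: GLn_def invertible_mat_def)
  have BC: "B \<in> carrier_mat n n"
    by (rule inverts_mat_carrier[OF AC B])
  have "A * B = 1\<^sub>m n" "B * A = 1\<^sub>m n"
    using B AC BC by (auto simp: inverts_mat_def)
  then have "conj n p A * conj n p B = 1\<^sub>m n" "conj n p B * conj n p A = 1\<^sub>m n"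
    by (simp_all add: conj_mult[OF p AC BC, symmetric] conj_mult[OF p BC AC, symmetric]
        conj_one[OF p])
  then show ?thesis
    using conj_carrier[OF AC, of p] conj_carrier[OF BC, of p]
    by (auto simp: GLn_def invertible_mat_def inverts_mat_def)
qed

section \<open>Diagonal matrices and the centre of a standard Levi subgroup\<close>

lemma index_diagonal_mult:
  assumes D: "D \<in> carrier_mat n n" "diagonal_mat D" and A: "(A :: 'k::field mat) \<in> carrier_mat n m"
    and i: "i < n" and j: "j < m"
  shows "(D * A) $$ (i,j) = D $$ (i,i) * A $$ (i,j)"
proof -
  have "(D * A) $$ (i,j) = (\<Sum>l<n. if l = i then D $$ (i,i) * A $$ (i,j) else 0)"
    unfolding index_mult_mat_sum[OF D(1) A i j]
    using D i by (intro sum.cong) (auto simp: diagonal_mat_def)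
  then show ?thesis
    using i by simp
qed

lemma index_mult_diagonal:
  assumes D: "D \<in> carrier_mat n n" "diagonal_mat D" and A: "(A :: 'k::field mat) \<in> carrier_mat m n"
    and i: "i < m" and j: "j < n"
  shows "(A * D) $$ (i,j) = A $$ (i,j) * D $$ (j,j)"
proof -
  have "(A * D) $$ (i,j) = (\<Sum>l<n. if l = j then A $$ (i,j) * D $$ (j,j) else 0)"
    unfolding index_mult_mat_sum[OF A D(1) i j]
    using D j by (intro sum.cong) (auto simp: diagonal_mat_def)
  then show ?thesis
    using j by simp
qed

lemma GLn_diagonal_nonzero:
  assumes D: "(D :: 'k::field mat) \<in> GLn n" "diagonal_mat D" and i: "i < n"
  shows "D $$ (i,i) \<noteq> 0"
proof -
  have DC: "D \<in> carrier_mat n n"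
    using D(1) by (rule GLn_carrier)
  obtain B where B: "inverts_mat D B" "inverts_mat B D"
    using D by (auto simp: GLn_def invertible_mat_def)
  have BC: "B \<in> carrier_mat n n"
    by (rule inverts_mat_carrier[OF DC B])
  have "(D * B) $$ (i,i) = 1"
    using B DC i by (simp add: inverts_mat_def)
  then show ?thesis
    using index_diagonal_mult[OF DC D(2) BC i i] by auto
qed

lemma diagonal_conj:
  assumes p: "p permutes {..<n}" and A: "(A :: 'k::field mat) \<in> carrier_mat n n" "diagonal_mat A"
  shows "diagonal_mat (conj n p A)"
  unfolding diagonal_mat_def
proof (intro allI impI)
  fix i j assume "i < dim_row (conj n p A)" "j < dim_col (conj n p A)" and ij: "i \<noteq> j"
  then have i: "i < n" and j: "j < n"
    using conj_carrier[OF A(1), of p] by auto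
  have "inv_into UNIV p i < n" "inv_into UNIV p j < n"
    using permutes_in_image[OF permutes_inv[OF p]] i j by simp_all
  moreover have "inv_into UNIV p i \<noteq> inv_into UNIV p j"
    using permutes_inj[OF permutes_inv[OF p]] ij by (simp add: inj_eq)
  ultimately show "conj n p A $$ (i,j) = 0"
    using A by (simp add: index_conj[OF p A(1) i j] diagonal_mat_def)
qed

lemma blk_refl [simp]: "blk J i i"
  by (auto simp: blk_def)

lemma diagonal_GLn_in_levi:
  assumes "A \<in> GLn n" "diagonal_mat A"
  shows "A \<in> levi n J"
  using assms by (auto simp: levi_def pattern_grp_def GLn_def diagonal_mat_def) (metis blk_refl)

text \<open>The Levi subgroup contains \<open>diag(1, \<dots>, n)\<close>, whose entries are pairwise distinct
  in characteristic \<open>0\<close>; only diagonal matrices commute with it.\<close>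

lemma center_levi_diagonal:
  assumes z: "z \<in> center_of (levi n J :: 'k::field_char_0 mat set)"
  shows "diagonal_mat z"
proof -
  have zC: "z \<in> carrier_mat n n" and comm: "\<And>h. h \<in> levi n J \<Longrightarrow> z * h = h * z"
    using z by (auto simp: center_of_def levi_def pattern_grp_def GLn_def)
  define D :: "'k mat" where "D = mat n n (\<lambda>(i,j). if i = j then of_nat (Suc i) else 0)"
  define E :: "'k mat" where "E = mat n n (\<lambda>(i,j). if i = j then 1 / of_nat (Suc i) else 0)"
  have DC: "D \<in> carrier_mat n n" and EC: "E \<in> carrier_mat n n"
    by (simp_all add: D_def E_def)
  have Dd: "diagonal_mat D" and Ed: "diagonal_mat E"
    by (simp_all add: D_def E_def diagonal_mat_def)
  have nz: "(1 + of_nat i :: 'k) \<noteq> 0" for i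
    using of_nat_neq_0[of i] by simp
  have "D * E = 1\<^sub>m n" "E * D = 1\<^sub>m n"
    by (auto intro!: eq_matI
        simp: index_diagonal_mult[OF DC Dd EC] index_diagonal_mult[OF EC Ed DC])
      (auto simp: D_def E_def nz)
  then have "D \<in> GLn n"
    using DC EC by (auto simp: GLn_def invertible_mat_def inverts_mat_def)
  then have zD: "z * D = D * z"
    using Dd by (intro comm diagonal_GLn_in_levi)
  show ?thesis
    unfolding diagonal_mat_def
  proof (intro allI impI)
    fix i j assume "i < dim_row z" "j < dim_col z" and ij: "i \<noteq> j"
    then have i: "i < n" and j: "j < n"
      using zC by auto
    have "z $$ (i,j) * D $$ (j,j) = D $$ (i,i) * z $$ (i,j)"
      using arg_cong[OF zD, of "\<lambda>M. M $$ (i,j)"]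
      by (simp add: index_mult_diagonal[OF DC Dd zC i j] index_diagonal_mult[OF DC Dd zC i j])
    then have "z $$ (i,j) * of_nat (Suc j) = of_nat (Suc i) * z $$ (i,j)"
      using i j by (simp add: D_def)
    then have "z $$ (i,j) * (of_nat (Suc j) - of_nat (Suc i)) = 0"
      by (simp add: algebra_simps)
    then show "z $$ (i,j) = 0"
      using ij by simp
  qed
qed

lemma diagonal_intertwining_zero_iff:
  assumes Z: "(Z :: 'k::field mat) \<in> GLn n" "diagonal_mat Z"
    and a: "a \<in> carrier_mat n n" and b: "b \<in> carrier_mat n n" and eq: "Z * a = b * Z"
    and i: "i < n" and j: "j < n"
  shows "a $$ (i,j) = 0 \<longleftrightarrow> b $$ (i,j) = 0"
proof -
  have ZC: "Z \<in> carrier_mat n n"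
    using Z(1) by (rule GLn_carrier)
  have "Z $$ (i,i) * a $$ (i,j) = b $$ (i,j) * Z $$ (j,j)"
    using arg_cong[OF eq, of "\<lambda>M. M $$ (i,j)"]
    by (simp add: index_diagonal_mult[OF ZC Z(2) a i j] index_mult_diagonal[OF ZC Z(2) b i j])
  then show ?thesis
    using GLn_diagonal_nonzero[OF Z i] GLn_diagonal_nonzero[OF Z j] by auto
qed

lemma diagonal_intertwining_levi_iff:
  assumes Z: "(Z :: 'k::field mat) \<in> GLn n" "diagonal_mat Z"
    and a: "a \<in> GLn n" and b: "b \<in> GLn n" and eq: "Z * a = b * Z"
  shows "a \<in> levi n J \<longleftrightarrow> b \<in> levi n J"
  using diagonal_intertwining_zero_iff[OF Z _ _ eq] a b
  by (auto simp: levi_def pattern_grp_def GLn_def)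

section \<open>Coxeter length as the number of inversions\<close>

definition simple_transp_prod :: "nat list \<Rightarrow> nat \<Rightarrow> nat" where
  "simple_transp_prod ss = foldr (\<lambda>i f. transpose i (Suc i) \<circ> f) ss id"

lemma simple_transp_prod_snoc:
  "simple_transp_prod (ss @ [k]) = simple_transp_prod ss \<circ> transpose k (Suc k)"
  by (induction ss) (simp_all add: simple_transp_prod_def comp_assoc)

definition inversions :: "nat \<Rightarrow> (nat \<Rightarrow> nat) \<Rightarrow> (nat \<times> nat) set" where
  "inversions n f = {(i,j). i < j \<and> j < n \<and> f j < f i}"

lemma finite_inversions [simp]: "finite (inversions n f)"
  by (rule finite_subset[of _ "{..<n} \<times> {..<n}"]) (auto simp: inversions_def)

lemma transpose_Suc_less_mono:
  "i < j \<Longrightarrow> (i, j) \<noteq> (k, Suc k) \<Longrightarrow> transpose k (Suc k) i < transpose k (Suc k) j"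
  unfolding transpose_def by auto

lemma transpose_Suc_pair_neq:
  "i < j \<Longrightarrow> (transpose k (Suc k) i, transpose k (Suc k) j) \<noteq> (k, Suc k)"
  unfolding transpose_def by auto

lemma inversions_comp_transpose_bij:
  assumes k: "Suc k < n"
  shows "bij_betw (map_prod (transpose k (Suc k)) (transpose k (Suc k)))
           (inversions n (f \<circ> transpose k (Suc k)) - {(k, Suc k)}) (inversions n f - {(k, Suc k)})"
proof -
  let ?s = "transpose k (Suc k)"
  have maps: "map_prod ?s ?s ` (inversions n (g \<circ> ?s) - {(k, Suc k)})
      \<subseteq> inversions n g - {(k, Suc k)}" for g
  proof
    fix x assume "x \<in> map_prod ?s ?s ` (inversions n (g \<circ> ?s) - {(k, Suc k)})"
    then obtain i j where x: "x = (?s i, ?s j)"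
      and ij: "i < j" "j < n" "g (?s j) < g (?s i)" "(i, j) \<noteq> (k, Suc k)"
      by (auto simp: inversions_def)
    have "?s j < n"
      using ij(2) k by (simp add: transpose_def)
    then show "x \<in> inversions n g - {(k, Suc k)}"
      using x ij transpose_Suc_less_mono[OF ij(1,4)] transpose_Suc_pair_neq[OF ij(1)]
      by (simp add: inversions_def)
  qed
  show ?thesis
    by (rule bij_betw_byWitness[where f' = "map_prod ?s ?s"])
      (use maps[of f] maps[of "f \<circ> ?s"] in \<open>auto simp: comp_assoc\<close>)
qed

lemma card_inversions_comp_transpose_le:
  assumes k: "Suc k < n"
  shows "card (inversions n (f \<circ> transpose k (Suc k))) \<le> card (inversions n f) + 1"
proof -
  let ?I = "inversions n (f \<circ> transpose k (Suc k))"
  have "card ?I \<le> card (?I - {(k, Suc k)}) + 1"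
    by (cases "(k, Suc k) \<in> ?I") (simp_all add: card_Diff_singleton)
  also have "\<dots> = card (inversions n f - {(k, Suc k)}) + 1"
    using bij_betw_same_card[OF inversions_comp_transpose_bij[OF k]] by simp
  also have "\<dots> \<le> card (inversions n f) + 1"
    by (simp add: card_Diff1_le)
  finally show ?thesis .
qed

lemma card_inversions_comp_transpose_descent:
  assumes k: "Suc k < n" and descent: "f (Suc k) < f k"
  shows "card (inversions n (f \<circ> transpose k (Suc k))) + 1 = card (inversions n f)"
proof -
  have "(k, Suc k) \<in> inversions n f" "(k, Suc k) \<notin> inversions n (f \<circ> transpose k (Suc k))"
    using k descent by (auto simp: inversions_def)
  then show ?thesis
    using bij_betw_same_card[OF inversions_comp_transpose_bij[OF k, of f]]
      card_Suc_Diff1[OF finite_inversions, of "(k, Suc k)" n f]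
    by simp
qed

lemma card_inversions_le_length:
  "\<forall>i\<in>set ss. Suc i < n \<Longrightarrow> card (inversions n (simple_transp_prod ss)) \<le> length ss"
proof (induction ss rule: rev_induct)
  case Nil
  have "inversions n (simple_transp_prod []) = {}"
    by (auto simp: simple_transp_prod_def inversions_def)
  then show ?case
    by simp
next
  case (snoc k ss)
  then have "Suc k < n" "card (inversions n (simple_transp_prod ss)) \<le> length ss"
    by auto
  then show ?case
    unfolding simple_transp_prod_snoc length_append_singleton
    using card_inversions_comp_transpose_le[of k n "simple_transp_prod ss"] by linarith
qed

lemma less_if_Suc_ascents:
  "(\<And>k. i \<le> k \<Longrightarrow> k < j \<Longrightarrow> (f :: nat \<Rightarrow> nat) k < f (Suc k)) \<Longrightarrow> i < j \<Longrightarrow> f i < f j"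
proof (induction j)
  case 0
  then show ?case
    by simp
next
  case (Suc j)
  show ?case
  proof (cases "i = j")
    case True
    then show ?thesis
      using Suc.prems by simp
  next
    case False
    then have "f i < f j"
      using Suc by simp
    also have "f j < f (Suc j)"
      using Suc.prems False by simp
    finally show ?thesis .
  qed
qed

lemma permutes_without_descents_eq_id:
  assumes p: "f permutes {..<n}" and ascents: "\<And>k. Suc k < n \<Longrightarrow> f k < f (Suc k)"
  shows "f = id"
proof -
  have ge: "i \<le> f i" if "i < n" for i
    using that
  proof (induction i)
    case 0
    then show ?case
      by simp
  next
    case (Suc i)
    then have "i \<le> f i" "f i < f (Suc i)"
      using ascents by simp_all
    then show ?case
      by simp
  qed
  have not_gt: "\<not> i < f i" if "i < n" for i
  proof
    assume "i < f i"
    then have "sum id {..<n} < sum f {..<n}"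
      using ge that by (intro sum_strict_mono_ex1) auto
    moreover have "sum id {..<n} = sum f {..<n}"
      using sum.permute[OF p, of id] by simp
    ultimately show False
      by simp
  qed
  have "f i = i" for i
  proof (cases "i < n")
    case True
    then show ?thesis
      using ge[OF True] not_gt[OF True] by simp
  next
    case False
    then show ?thesis
      using permutes_not_in[OF p] by simp
  qed
  then show ?thesis
    by auto
qed

lemma simple_transp_prod_card_inversions:
  "f permutes {..<n} \<Longrightarrow>
    \<exists>ss. length ss = card (inversions n f) \<and> (\<forall>i\<in>set ss. Suc i < n) \<and> f = simple_transp_prod ss"
proof (induction "card (inversions n f)" arbitrary: f)
  case 0
  then have no_inversions: "inversions n f = {}"
    by (metis card_0_eq finite_inversions)
  have "f k < f (Suc k)" if "Suc k < n" for k
  proof -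
    have "(k, Suc k) \<notin> inversions n f"
      using no_inversions by simp
    moreover have "f k \<noteq> f (Suc k)"
      using inj_eq[OF permutes_inj[OF 0(2)], of k "Suc k"] by simp
    ultimately show ?thesis
      using that by (auto simp: inversions_def)
  qed
  then have "f = id"
    by (rule permutes_without_descents_eq_id[OF 0(2)])
  then have "f = simple_transp_prod []"
    by (simp add: simple_transp_prod_def)
  then show ?case
    using no_inversions by (intro exI[of _ "[]"]) simp
next
  case (Suc m)
  have "inversions n f \<noteq> {}"
    using Suc.hyps(2) by (metis card.empty nat.distinct(1))
  then obtain i j where ij: "i < j" "j < n" "f j < f i"
    unfolding inversions_def by blast
  obtain k where k: "i \<le> k" "k < j" "\<not> f k < f (Suc k)"
    using less_if_Suc_ascents[of i j f] ij by force
  have kn: "Suc k < n"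
    using k ij by simp
  have descent: "f (Suc k) < f k"
    using k(3) inj_eq[OF permutes_inj[OF Suc.prems], of k "Suc k"] by simp
  let ?g = "f \<circ> transpose k (Suc k)"
  have "?g permutes {..<n}"
    using kn by (intro permutes_compose[OF _ Suc.prems] permutes_swap_id) auto
  moreover have "m = card (inversions n ?g)"
    using card_inversions_comp_transpose_descent[OF kn descent] Suc.hyps(2) by simp
  ultimately obtain ss where ss: "length ss = m" "\<forall>i\<in>set ss. Suc i < n" "?g = simple_transp_prod ss"
    using Suc.hyps(1) by metis
  have "f = simple_transp_prod (ss @ [k])"
    by (simp add: simple_transp_prod_snoc ss(3)[symmetric] comp_assoc)
  then show ?case
    using ss Suc.hyps(2) kn by (intro exI[of _ "ss @ [k]"]) auto
qed

lemma wlen_eq_card_inversions: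
  assumes "f permutes {..<n}"
  shows "wlen n f = card (inversions n f)"
  unfolding wlen_def
proof (rule Least_equality)
  show "\<exists>ss. length ss = card (inversions n f) \<and> (\<forall>i\<in>set ss. Suc i < n) \<and>
      f = foldr (\<lambda>i f. transpose i (Suc i) \<circ> f) ss id"
    using simple_transp_prod_card_inversions[OF assms] by (simp add: simple_transp_prod_def)
next
  fix l assume "\<exists>ss. length ss = l \<and> (\<forall>i\<in>set ss. Suc i < n) \<and>
      f = foldr (\<lambda>i f. transpose i (Suc i) \<circ> f) ss id"
  then show "card (inversions n f) \<le> l"
    using card_inversions_le_length by (auto simp: simple_transp_prod_def)
qed

lemma minrep_ascent:
  assumes w: "minrep n J' J w" and J: "J \<subseteq> {i. Suc i < n}" and k: "k \<in> J"
  shows "w k < w (Suc k)"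
proof (rule ccontr)
  assume "\<not> w k < w (Suc k)"
  moreover have wp: "w permutes {..<n}"
    using w by (simp add: minrep_def weyl_def)
  ultimately have descent: "w (Suc k) < w k"
    using inj_eq[OF permutes_inj[OF wp], of k "Suc k"] by simp
  have kn: "Suc k < n"
    using k J by auto
  let ?s = "transpose k (Suc k)"
  have sp: "?s permutes {..<n}"
    using kn by (intro permutes_swap_id) auto
  have "blk J k (Suc k)" "blk J (Suc k) k"
    using k by (auto simp: blk_def less_Suc_eq)
  then have "blk J i (?s i)" for i
    by (auto simp: transpose_def)
  then have "?s \<in> weyl_levi n J"
    using sp by (simp add: weyl_levi_def weyl_def)
  moreover have "id \<in> weyl_levi n J'"
    by (simp add: weyl_levi_def weyl_def permutes_id)
  ultimately have "wlen n w \<le> wlen n (id \<circ> w \<circ> ?s)"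
    using w unfolding minrep_def by blast
  then show False
    using card_inversions_comp_transpose_descent[OF kn descent]
    by (simp add: wlen_eq_card_inversions[OF wp]
        wlen_eq_card_inversions[OF permutes_compose[OF sp wp]])
qed

lemma minrep_less_on_blk:
  assumes w: "minrep n J' J w" and J: "J \<subseteq> {i. Suc i < n}" and "i < j" "blk J i j"
  shows "w i < w j"
proof (rule less_if_Suc_ascents[of i j w])
  fix k assume "i \<le> k" "k < j"
  then have "k \<in> J"
    using \<open>blk J i j\<close> \<open>i < j\<close> by (simp add: blk_def)
  then show "w k < w (Suc k)"
    by (rule minrep_ascent[OF w J])
qed fact

lemma BM_dominant_weyl_act_inv_minrep:
  assumes dom: "B_dominant n \<nu>" and w: "minrep n J' J w" and J: "J \<subseteq> {i. Suc i < n}"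
  shows "BM_dominant n J (weyl_act (inv_into UNIV w) \<nu>)"
proof -
  have wp: "w permutes {..<n}"
    using w by (simp add: minrep_def weyl_def)
  have "\<nu> (w j) \<le> \<nu> (w i)" if "i < j" "j < n" "blk J i j" for i j
    using dom minrep_less_on_blk[OF w J that(1,3)] permutes_in_image[OF wp, of j] that(2)
    by (simp add: B_dominant_def)
  then show ?thesis
    by (simp add: BM_dominant_def weyl_act_def permutes_inv_inv[OF wp])
qed

section \<open>Conjugating the centre and \<open>Z\<^sup>+\<close>\<close>

lemma conj_center_levi:
  assumes p: "p permutes {..<n}" and X: "X \<in> center_of (levi n J' :: 'k::field_char_0 mat set)"
  shows "conj n p X \<in> center_of (levi n J \<inter> conj n p ` levi n J')"
proof -
  have XL: "X \<in> levi n J'" and XG: "X \<in> GLn n"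
    using X by (auto simp: center_of_def levi_def pattern_grp_def)
  have XC: "X \<in> carrier_mat n n"
    using XG by (rule GLn_carrier)
  have "conj n p X \<in> levi n J"
    using center_levi_diagonal[OF X]
    by (intro diagonal_GLn_in_levi conj_GLn[OF p XG] diagonal_conj[OF p XC])
  moreover have "conj n p X * conj n p h = conj n p h * conj n p X" if "h \<in> levi n J'" for h
  proof -
    have "h \<in> carrier_mat n n"
      using that by (simp add: levi_def pattern_grp_def GLn_def)
    moreover have "X * h = h * X"
      using X that by (simp add: center_of_def)
    ultimately show ?thesis
      by (simp add: conj_mult[OF p XC, symmetric] conj_mult[OF p _ XC, symmetric])
  qed
  ultimately show ?thesis
    using XL by (auto simp: center_of_def)
qed

lemma conj_cochar_mat:
  assumes p: "p permutes {..<n}"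
  shows "conj n p (cochar_mat n lam t) = cochar_mat n (weyl_act p lam) (t :: 'k::field)"
proof (rule eq_matI)
  fix i j
  assume "i < dim_row (cochar_mat n (weyl_act p lam) t)"
    and "j < dim_col (cochar_mat n (weyl_act p lam) t)"
  then have i: "i < n" and j: "j < n"
    by (simp_all add: cochar_mat_def)
  have "inv_into UNIV p i < n" "inv_into UNIV p j < n"
    using permutes_in_image[OF permutes_inv[OF p]] i j by simp_all
  moreover have "inv_into UNIV p i = inv_into UNIV p j \<longleftrightarrow> i = j"
    using permutes_inj[OF permutes_inv[OF p]] by (simp add: inj_eq)
  ultimately show
    "conj n p (cochar_mat n lam t) $$ (i,j) = cochar_mat n (weyl_act p lam) t $$ (i,j)"
    using i j by (simp add: index_conj[OF p _ i j] cochar_mat_def weyl_act_def)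
qed (simp_all add: conj_def perm_mat_def cochar_mat_def)

lemma cochar_in_conj_center:
  assumes p: "p permutes {..<n}"
    and "cochar_in n lam (center_of (levi n J' :: 'k::field_char_0 mat set))"
  shows "cochar_in n (weyl_act p lam) (center_of (levi n J \<inter> conj n p ` levi n J' :: 'k mat set))"
  using assms by (simp add: cochar_in_def conj_cochar_mat[OF p, symmetric] conj_center_levi)

lemma conj_entrywise_iff:
  assumes p: "p permutes {..<n}" and A: "(A :: 'k::field mat) \<in> carrier_mat n n"
  shows "(\<forall>i<n. \<forall>j<n. P i j (conj n p A $$ (i,j))) \<longleftrightarrow> (\<forall>i<n. \<forall>j<n. P (p i) (p j) (A $$ (i,j)))"
proof
  assume conj_entries: "\<forall>i<n. \<forall>j<n. P i j (conj n p A $$ (i,j))"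
  show "\<forall>i<n. \<forall>j<n. P (p i) (p j) (A $$ (i,j))"
  proof (intro allI impI)
    fix i j assume ij: "i < n" "j < n"
    then have "p i < n" "p j < n"
      using permutes_in_image[OF p] by simp_all
    then have "P (p i) (p j) (conj n p A $$ (p i, p j))"
      using conj_entries by blast
    then show "P (p i) (p j) (A $$ (i,j))"
      using index_conj[OF p A \<open>p i < n\<close> \<open>p j < n\<close>] by (simp add: permutes_inverses(2)[OF p])
  qed
next
  assume entries: "\<forall>i<n. \<forall>j<n. P (p i) (p j) (A $$ (i,j))"
  show "\<forall>i<n. \<forall>j<n. P i j (conj n p A $$ (i,j))"
  proof (intro allI impI)
    fix i j assume ij: "i < n" "j < n"
    let ?q = "inv_into UNIV p"
    have "?q i < n" "?q j < n"
      using permutes_in_image[OF permutes_inv[OF p]] ij by simp_all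
    then have "P (p (?q i)) (p (?q j)) (A $$ (?q i, ?q j))"
      using entries by blast
    then show "P i j (conj n p A $$ (i,j))"
      using index_conj[OF p A ij] by (simp add: permutes_inverses(1)[OF p])
  qed
qed

lemma conj_integral_mats_iff:
  assumes p: "p permutes {..<n}" and A: "(A :: 'k::field mat) \<in> carrier_mat n n"
  shows "conj n p A \<in> integral_mats n v \<longleftrightarrow> A \<in> integral_mats n v"
  using conj_entrywise_iff[OF p A, of "\<lambda>_ _ x. x \<in> intring v"] by (simp add: integral_mats_def)

lemma conj_level1_mats_iff:
  assumes p: "p permutes {..<n}" and A: "(A :: 'k::field mat) \<in> carrier_mat n n"
  shows "conj n p A \<in> level1_mats n v \<longleftrightarrow> A \<in> level1_mats n v"
proof -
  have "(1\<^sub>m n :: 'k mat) $$ (p i, p j) = 1\<^sub>m n $$ (i,j)" if "i < n" "j < n" for i j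
    using that permutes_in_image[OF p] inj_eq[OF permutes_inj[OF p]] by simp
  then show ?thesis
    using conj_entrywise_iff[OF p A, of "\<lambda>i j x. x - 1\<^sub>m n $$ (i,j) \<in> maxideal v"]
    by (simp add: level1_mats_def)
qed

lemma conj_intertwining:
  assumes p: "p permutes {..<n}" and z: "z \<in> center_of (levi n J' :: 'k::field_char_0 mat set)"
    and a: "a \<in> GLn n" and b: "b \<in> GLn n" and eq: "z * a = b * z"
  shows "conj n p z * conj n p a = conj n p b * conj n p z"
    and "conj n p a \<in> levi n J \<longleftrightarrow> conj n p b \<in> levi n J"
proof -
  have zG: "z \<in> GLn n"
    using z by (simp add: center_of_def levi_def pattern_grp_def)
  show eq': "conj n p z * conj n p a = conj n p b * conj n p z"
    using eq by (simp add: conj_mult[OF p GLn_carrier GLn_carrier, symmetric] zG a b)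
  have "diagonal_mat (conj n p z)"
    using diagonal_conj[OF p GLn_carrier[OF zG] center_levi_diagonal[OF z]] .
  then show "conj n p a \<in> levi n J \<longleftrightarrow> conj n p b \<in> levi n J"
    using diagonal_intertwining_levi_iff[OF conj_GLn[OF p zG] _ conj_GLn[OF p a]
        conj_GLn[OF p b] eq']
    by blast
qed

lemma conj_Zplus_unip_condition:
  assumes p: "p permutes {..<n}" and z: "z \<in> center_of (levi n J' :: 'k::field_char_0 mat set)"
    and step: "\<forall>u \<in> unip n J' \<inter> integral_mats n v.
      \<exists>u' \<in> unip n J' \<inter> integral_mats n v. z * u = u' * z"
    and x: "x \<in> (levi n J \<inter> conj n p ` unip n J') \<inter> integral_mats n v"
  shows "\<exists>x' \<in> (levi n J \<inter> conj n p ` unip n J') \<inter> integral_mats n v.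
    conj n p z * x = x' * conj n p z"
proof -
  obtain u where u: "u \<in> unip n J'" "x = conj n p u"
    using x by blast
  have uG: "u \<in> GLn n"
    using u by (simp add: unip_def)
  then have "u \<in> integral_mats n v"
    using x u conj_integral_mats_iff[OF p GLn_carrier[OF uG]] by simp
  then obtain u' where u': "u' \<in> unip n J'" "u' \<in> integral_mats n v" "z * u = u' * z"
    using step u by blast
  have u'G: "u' \<in> GLn n"
    using u' by (simp add: unip_def)
  have "conj n p u' \<in> levi n J"
    using x u conj_intertwining(2)[OF p z uG u'G u'(3)] by simp
  moreover have "conj n p u' \<in> integral_mats n v"
    using u'(2) conj_integral_mats_iff[OF p GLn_carrier[OF u'G]] by simp
  ultimately show ?thesis
    using u u'(1) conj_intertwining(1)[OF p z uG u'G u'(3)]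
    by (intro bexI[of _ "conj n p u'"]) auto
qed

lemma conj_Zplus_ounip_condition:
  assumes p: "p permutes {..<n}" and z: "z \<in> center_of (levi n J' :: 'k::field_char_0 mat set)"
    and step: "\<forall>u \<in> ounip n J' \<inter> level1_mats n v.
      \<exists>u' \<in> ounip n J' \<inter> level1_mats n v. u * z = z * u'"
    and x: "x \<in> (levi n J \<inter> conj n p ` ounip n J') \<inter> level1_mats n v"
  shows "\<exists>x' \<in> (levi n J \<inter> conj n p ` ounip n J') \<inter> level1_mats n v.
    x * conj n p z = conj n p z * x'"
proof -
  obtain u where u: "u \<in> ounip n J'" "x = conj n p u"
    using x by blast
  have uG: "u \<in> GLn n"
    using u by (simp add: ounip_def)
  then have "u \<in> level1_mats n v"
    using x u conj_level1_mats_iff[OF p GLn_carrier[OF uG]] by simp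
  then obtain u' where u': "u' \<in> ounip n J'" "u' \<in> level1_mats n v" "u * z = z * u'"
    using step u by blast
  have u'G: "u' \<in> GLn n"
    using u' by (simp add: ounip_def)
  have "conj n p u' \<in> levi n J"
    using x u conj_intertwining(2)[OF p z u'G uG u'(3)[symmetric]] by simp
  moreover have "conj n p u' \<in> level1_mats n v"
    using u'(2) conj_level1_mats_iff[OF p GLn_carrier[OF u'G]] by simp
  ultimately show ?thesis
    using u u'(1) conj_intertwining(1)[OF p z u'G uG u'(3)[symmetric]]
    by (intro bexI[of _ "conj n p u'"]) auto
qed

lemma conj_Zplus:
  assumes p: "p permutes {..<n}"
  shows "conj n p ` Zplus n v (center_of (levi n J')) (unip n J') (ounip n J')
    \<subseteq> Zplus n v (center_of (levi n J \<inter> conj n p ` levi n J' :: 'k::field_char_0 mat set))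
         (levi n J \<inter> conj n p ` unip n J') (levi n J \<inter> conj n p ` ounip n J')"
proof (rule image_subsetI)
  fix z assume "z \<in> Zplus n v (center_of (levi n J')) (unip n J') (ounip n J')"
  then have z: "z \<in> center_of (levi n J')"
    and "\<forall>u \<in> unip n J' \<inter> integral_mats n v.
      \<exists>u' \<in> unip n J' \<inter> integral_mats n v. z * u = u' * z"
    and "\<forall>u \<in> ounip n J' \<inter> level1_mats n v.
      \<exists>u' \<in> ounip n J' \<inter> level1_mats n v. u * z = z * u'"
    by (simp_all add: Zplus_def)
  then show "conj n p z \<in> Zplus n v (center_of (levi n J \<inter> conj n p ` levi n J'))
      (levi n J \<inter> conj n p ` unip n J') (levi n J \<inter> conj n p ` ounip n J')"
    using conj_center_levi[OF p z] conj_Zplus_unip_condition[OF p z]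
      conj_Zplus_ounip_condition[OF p z]
    by (simp add: Zplus_def)
qed

theorem lemma4p17:
  fixes n :: nat and J J' :: "nat set" and w :: "nat \<Rightarrow> nat" and \<nu> :: "nat \<Rightarrow> int"
    and v :: "'k::field_char_0 \<Rightarrow> int" and \<pi> :: 'k
  assumes L: "padic_field v \<pi>"
    and J: "J \<subseteq> {i. Suc i < n}" and J': "J' \<subseteq> {i. Suc i < n}"
    and nu_cent: "cochar_in n \<nu> (center_of (levi n J' :: 'k mat set))"
    and nu_dom: "B_dominant n \<nu>"
    and w: "minrep n J' J w"
  shows "cochar_in n (weyl_act (inv_into UNIV w) \<nu>)
           (center_of (levi n J \<inter> conj n (inv_into UNIV w) ` levi n J' :: 'k mat set))
       \<and> BM_dominant n J (weyl_act (inv_into UNIV w) \<nu>)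
       \<and> conj n (inv_into UNIV w) ` Zplus n v (center_of (levi n J')) (unip n J') (ounip n J')
           \<subseteq> Zplus n v (center_of (levi n J \<inter> conj n (inv_into UNIV w) ` levi n J'))
                (levi n J \<inter> conj n (inv_into UNIV w) ` unip n J')
                (levi n J \<inter> conj n (inv_into UNIV w) ` ounip n J')"
proof -
  have p: "inv_into UNIV w permutes {..<n}"
    using w by (simp add: minrep_def weyl_def permutes_inv)
  show ?thesis
    using cochar_in_conj_center[OF p nu_cent] BM_dominant_weyl_act_inv_minrep[OF nu_dom w J]
      conj_Zplus[OF p]
    by blast
qed

end
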